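(* Let $\lambda\ge 0$ and $\Omega:\mathbb{R}^d\to[0,\infty)$ be fixed, and define for any finite set of samples $S\subset\mathbb{R}^d\times\mathbb{R}$ and $\boldsymbol{\theta}=(\mathbf{w},b)\in\mathbb{R}^{d+1}$ $$\mathrm{MSE}(S,\boldsymbol{\theta})=\frac{1}{|S|}\sum_{(\mathbf{x},y)\in S}(\mathbf{w}^\top\mathbf{x}+b-y)^2,\qquad \mathcal{L}(S,\boldsymbol{\theta})=\mathrm{MSE}(S,\boldsymbol{\theta})+\lambda\,\Omega(\mathbf{w}).$$ Let $\mathcal{D}_{tr}$ be a pristine training set of $n$ samples, let $0\le\alpha<1$ be such that $\alpha n$ is an integer, and let $\mathcal{D}_p$ be an arbitrary set of $\alpha n$ samples (poisoning points), so that $\mathcal{D}=\mathcal{D}_{tr}\cup\mathcal{D}_p$ has $N=(1+\alpha)n$ samples indexed by $\{1,\dots,N\}$. Let $(\hat{\boldsymbol{\theta}},\hat{\mathcal{I}})$ be a global minimizer of $$\min_{\boldsymbol{\theta},\,\mathcal{I}}\ \mathcal{L}(\mathcal{D}^{\mathcal{I}},\boldsymbol{\theta})\quad\text{subject to } \mathcal{I}\subseteq\{1,\dots,N\},\ |\mathcal{I}|=n,$$ where $\mathcal{D}^{\mathcal{I}}$ denotes the samples of $\mathcal{D}$ with indices in $\mathcal{I}$, and let $\boldsymbol{\theta}^*\in\arg\min_{\boldsymbol{\theta}}\mathcal{L}(\mathcal{D}_{tr},\boldsymbol{\theta})$. Then there exists a subset $\mathcal{D}'\subseteq\mathcal{D}_{tr}$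 of $(1-\alpha)n$ pristine samples such that $$\mathrm{MSE}(\mathcal{D}',\hat{\boldsymbol{\theta}})\le\Big(1+\frac{\alpha}{1-\alpha}\Big)\,\mathcal{L}(\mathcal{D}_{tr},\boldsymbol{\theta}^* ).$$ No assumption is made on how $\mathcal{D}_p$ is generated.
   Context: $\mathcal{L}$ is the regularized linear-regression loss with linear predictor $f(\mathbf{x},\boldsymbol{\theta})=\mathbf{w}^\top\mathbf{x}+b$; typical choices of $\Omega$ are $0$ (OLS), $\tfrac12\|\mathbf{w}\|_2^2$ (ridge), $\|\mathbf{w}\|_1$ (LASSO), or an elastic-net combination. *)

theory Defs
  imports "HOL-Analysis.Analysis"
begin

text \<open>A dataset of N samples is given by features X :: nat => real^'d and labels
Y :: nat => real, indexed by {1..N}; a sub-dataset is an index set I.\<close>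

definition MSE :: "(nat \<Rightarrow> real^'d) \<Rightarrow> (nat \<Rightarrow> real) \<Rightarrow> nat set \<Rightarrow> real^'d \<Rightarrow> real \<Rightarrow> real" where
  "MSE X Y I w b = (1 / real (card I)) * (\<Sum>i\<in>I. (w \<bullet> X i + b - Y i)\<^sup>2)"

definition Loss :: "real \<Rightarrow> (real^'d \<Rightarrow> real) \<Rightarrow> (nat \<Rightarrow> real^'d) \<Rightarrow> (nat \<Rightarrow> real) \<Rightarrow> nat set \<Rightarrow> real^'d \<Rightarrow> real \<Rightarrow> real" where
  "Loss lam \<Omega> X Y I w b = MSE X Y I w b + lam * \<Omega> w"

end

theory Submission
  imports Defs
begin

text \<open>The trimmed minimiser keeps \<open>n\<close> of the \<open>n + m\<close> indices, so it shares at least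
\<open>n - m = (1 - \<alpha>) n\<close> of them with the pristine set. On those shared points its total squared
error is at most its total error on all \<open>n\<close> kept points, which by optimality of the trimmed
fit is at most \<open>n\<close> times the pristine loss. Dividing by \<open>(1 - \<alpha>) n\<close> gives the factor
\<open>1 / (1 - \<alpha>) = 1 + \<alpha> / (1 - \<alpha>)\<close>.\<close>

lemma card_Int_ge_card_add_diff:
  assumes "finite U" "A \<subseteq> U" "B \<subseteq> U"
  shows "card A + card B - card U \<le> card (A \<inter> B)"
proof -
  have "finite A" "finite B"
    using finite_subset[OF assms(2,1)] finite_subset[OF assms(3,1)] .
  then have "card A + card B = card (A \<union> B) + card (A \<inter> B)"
    by (rule card_Un_Int)
  moreover have "card (A \<union> B) \<le> card U"
    using assms by (intro card_mono) auto
  ultimately show ?thesis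
    by linarith
qed

lemma card_mult_MSE:
  "real (card I) * MSE X Y I w b = (\<Sum>i\<in>I. (w \<bullet> X i + b - Y i)\<^sup>2)"
proof (cases "card I = 0")
  case True
  then have "I = {} \<or> infinite I"
    by (simp add: card_eq_0_iff)
  then show ?thesis
    using True by auto
next
  case False
  then show ?thesis
    by (simp add: MSE_def)
qed

lemma card_mult_MSE_mono:
  assumes "D \<subseteq> I" "finite I"
  shows "real (card D) * MSE X Y D w b \<le> real (card I) * MSE X Y I w b"
  unfolding card_mult_MSE using assms by (intro sum_mono2) auto

lemma MSE_nonneg: "MSE X Y I w b \<ge> 0"
  by (simp add: MSE_def sum_nonneg)

lemma MSE_subset_le:
  assumes "D \<subseteq> I" "finite I" "0 \<le> c" "real (card I) \<le> c * real (card D)"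
  shows "MSE X Y D w b \<le> c * MSE X Y I w b"
proof (cases "D = {}")
  case True
  then have "MSE X Y D w b = 0"
    by (simp add: MSE_def)
  then show ?thesis
    using assms(3) MSE_nonneg[of X Y I w b] by (simp add: mult_nonneg_nonneg)
next
  case False
  then have "real (card D) > 0"
    using assms(1,2) finite_subset by (simp add: card_gt_0_iff)
  have "real (card D) * MSE X Y D w b \<le> real (card I) * MSE X Y I w b"
    using assms(1,2) by (rule card_mult_MSE_mono)
  also have "\<dots> \<le> real (card D) * (c * MSE X Y I w b)"
    using assms(4) MSE_nonneg[of X Y I w b] by (simp add: mult_right_mono mult.assoc [symmetric] mult.commute)
  finally show ?thesis
    using \<open>real (card D) > 0\<close> by simp
qed

lemma MSE_le_Loss:
  assumes "lam * \<Omega> w \<ge> 0"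
  shows "MSE X Y I w b \<le> Loss lam \<Omega> X Y I w b"
  using assms by (simp add: Loss_def)

theorem theorem2:
  fixes lam :: real and \<Omega> :: "real^'d \<Rightarrow> real"
    and X :: "nat \<Rightarrow> real^'d" and Y :: "nat \<Rightarrow> real"
    and n m :: nat and \<alpha> :: real
    and Dtr :: "nat set"
    and w_hat :: "real^'d" and b_hat :: real and I_hat :: "nat set"
    and w_star :: "real^'d" and b_star :: real
  assumes lam_nonneg: "lam \<ge> 0"
    and Omega_nonneg: "\<And>w. \<Omega> w \<ge> 0"
    and alpha: "0 \<le> \<alpha>" "\<alpha> < 1"
    and m_def: "real m = \<alpha> * real n"
    and Dtr_sub: "Dtr \<subseteq> {1..n + m}"
    and Dtr_card: "card Dtr = n"
    and I_hat_sub: "I_hat \<subseteq> {1..n + m}"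
    and I_hat_card: "card I_hat = n"
    and hat_min: "\<And>I w b. I \<subseteq> {1..n + m} \<Longrightarrow> card I = n \<Longrightarrow>
                    Loss lam \<Omega> X Y I_hat w_hat b_hat \<le> Loss lam \<Omega> X Y I w b"
    and star_min: "\<And>w b. Loss lam \<Omega> X Y Dtr w_star b_star \<le> Loss lam \<Omega> X Y Dtr w b"
  shows "\<exists>D'. D' \<subseteq> Dtr \<and> card D' = n - m \<and>
           MSE X Y D' w_hat b_hat \<le> (1 + \<alpha> / (1 - \<alpha>)) * Loss lam \<Omega> X Y Dtr w_star b_star"
proof -
  have "n - m \<le> card (Dtr \<inter> I_hat)"
    using card_Int_ge_card_add_diff[OF _ Dtr_sub I_hat_sub] Dtr_card I_hat_card by simp
  then obtain D' where D': "D' \<subseteq> Dtr \<inter> I_hat" "card D' = n - m"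
    by (meson obtain_subset_with_card_n)
  have "MSE X Y I_hat w_hat b_hat \<le> Loss lam \<Omega> X Y I_hat w_hat b_hat"
    using lam_nonneg Omega_nonneg by (intro MSE_le_Loss) simp
  also have "\<dots> \<le> Loss lam \<Omega> X Y Dtr w_star b_star"
    by (rule hat_min[OF Dtr_sub Dtr_card])
  finally have trimmed_le: "MSE X Y I_hat w_hat b_hat \<le> Loss lam \<Omega> X Y Dtr w_star b_star" .
  have "real m \<le> real n"
    using m_def alpha by (simp add: mult_left_le_one_le)
  then have "real (card D') = (1 - \<alpha>) * real n"
    using D'(2) m_def by (simp add: of_nat_diff left_diff_distrib)
  then have "MSE X Y D' w_hat b_hat \<le> 1 / (1 - \<alpha>) * MSE X Y I_hat w_hat b_hat"
    using D'(1) finite_subset[OF I_hat_sub] I_hat_card alpha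
    by (intro MSE_subset_le) auto
  also have "\<dots> \<le> 1 / (1 - \<alpha>) * Loss lam \<Omega> X Y Dtr w_star b_star"
    using trimmed_le alpha by (intro mult_left_mono) auto
  also have "1 / (1 - \<alpha>) = 1 + \<alpha> / (1 - \<alpha>)"
    using alpha by (simp add: field_simps)
  finally show ?thesis
    using D' by blast
qed

end
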